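(* In the unknown-variance Gaussian prediction model described in the context, let $a\in\mathbb{R}$ with $\nu=d/2+a+1>0$, let $f:(0,1)\to[0,\infty)$, and let $\hat p_{\mathrm{GM}}$ be the Bayesian predictive density with respect to the prior $$\pi_{\mathrm{GM}}(\mu,\eta)=\int_0^1\phi\{\mu;0,\eta^{-1}\lambda^{-1}(1-\lambda)\}\,\eta^{a}\lambda^{a}f(\lambda)\,d\lambda.$$ Then $$\hat p_{\mathrm{GM}}(y\mid\bar x_n,s_n)=c\left(\frac{s_{n+1}}{s_n}\right)^{-\nu}\frac{J_{n+1}}{J_n}\,\hat p_R(y\mid\bar x_n,s_n),\qquad c=\left(1+\frac1n\right)^{\nu}\frac{B\{\nu,(n-1)d/2\}}{B(\nu,nd/2)},$$ where for $l\in\{n,n+1\}$, $$J_l=\int_0^1\frac{\lambda^{\nu-1}\{1+(l-1)\lambda\}^{d/2-\nu-1}}{(1+w_l\lambda)^{(l-1)d/2+\nu}}\,f\!\left\{\frac{l\lambda}{1+(l-1)\lambda}\right\}d\lambda,\qquad w_l=\frac{l\|\bar x_l\|^2}{s_l}.$$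
   Context: Model: $x_1,\dots,x_n,y$ ($n\ge2$, $d\ge1$) are independent with $x_i\sim N_d(\mu,\eta^{-1}I_d)$ and $y\sim N_d(\mu,\eta^{-1}I_d)$, where $\mu\in\mathbb{R}^d$ and $\eta=1/\sigma^2>0$ are unknown; $\bar x_n=n^{-1}\sum_i x_i$, $s_n=\sum_i\|x_i-\bar x_n\|^2$, $\bar x_{n+1}=(n\bar x_n+y)/(n+1)$, $s_{n+1}=s_n+n\|y-\bar x_n\|^2/(n+1)$. $\phi(\cdot;\theta,\tau)$ is the $N_d(\theta,\tau I_d)$ density, $\gamma(\cdot;k)$ the chi-square density with $k$ degrees of freedom, $B(\cdot,\cdot)$ the Beta function. For a (possibly improper) prior density $\pi(\mu,\eta)$, the Bayesian predictive density is $$\hat p_\pi(y\mid\bar x_n,s_n)=\frac{\iint \phi(y;\mu,\eta^{-1})\,\phi(\bar x_n;\mu,n^{-1}\eta^{-1})\,\eta\gamma\{\eta s_n;(n-1)d\}\,\pi(\mu,\eta)\,d\mu\,d\eta}{\iint \phi(\bar x_n;\mu,n^{-1}\eta^{-1})\,\eta\gamma\{\eta s_n;(n-1)d\}\,\pi(\mu,\eta)\,d\mu\,d\eta}.$$ The best equivariant predictive density is $\hat p_R(y\mid\bar x_n,s_n)=\frac{\Gamma(nd/2)}{\Gamma\{(n-1)d/2\}}\left(\frac{1}{\pi s_n}\frac{n}{n+1}\right)^{d/2}\left(1+\frac{1}{s_n}\frac{n}{n+1}\|y-\bar x_n\|^2\right)^{-nd/2}$. *)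

theory Defs
  imports "HOL-Analysis.Analysis"
begin

definition gauss_dens :: "real^'d \<Rightarrow> real^'d \<Rightarrow> real \<Rightarrow> real" where
  "gauss_dens y \<theta> \<tau> =
     (2 * pi * \<tau>) powr (- real CARD('d) / 2) * exp (- (norm (y - \<theta>))\<^sup>2 / (2 * \<tau>))"

definition chisq_dens :: "real \<Rightarrow> real \<Rightarrow> real" where
  "chisq_dens k t =
     (if t > 0 then t powr (k / 2 - 1) * exp (- t / 2) / (2 powr (k / 2) * Gamma (k / 2)) else 0)"

definition sample_mean :: "(nat \<Rightarrow> real^'d) \<Rightarrow> nat \<Rightarrow> real^'d" where
  "sample_mean x n = (1 / real n) *\<^sub>R (\<Sum>i<n. x i)"

definition sample_ss :: "(nat \<Rightarrow> real^'d) \<Rightarrow> nat \<Rightarrow> real" where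
  "sample_ss x n = (\<Sum>i<n. (norm (x i - sample_mean x n))\<^sup>2)"

definition mean_upd :: "nat \<Rightarrow> real^'d \<Rightarrow> real^'d \<Rightarrow> real^'d" where
  "mean_upd n xb y = (1 / (real n + 1)) *\<^sub>R (real n *\<^sub>R xb + y)"

definition ss_upd :: "nat \<Rightarrow> real^'d \<Rightarrow> real \<Rightarrow> real^'d \<Rightarrow> real" where
  "ss_upd n xb s y = s + real n * (norm (y - xb))\<^sup>2 / (real n + 1)"

definition pred_num :: "nat \<Rightarrow> (real^'d \<Rightarrow> real \<Rightarrow> ennreal) \<Rightarrow> real^'d \<Rightarrow> real^'d \<Rightarrow> real \<Rightarrow> ennreal" where
  "pred_num n \<pi> y xb s =
     (\<integral>\<^sup>+ \<eta>. indicator {0<..} \<eta> *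
        (\<integral>\<^sup>+ \<mu>. ennreal (gauss_dens y \<mu> (1 / \<eta>) * gauss_dens xb \<mu> (1 / (real n * \<eta>)) * \<eta>
                   * chisq_dens (real (n - 1) * real CARD('d)) (\<eta> * s)) * \<pi> \<mu> \<eta> \<partial>lborel) \<partial>lborel)"

definition pred_den :: "nat \<Rightarrow> (real^'d \<Rightarrow> real \<Rightarrow> ennreal) \<Rightarrow> real^'d \<Rightarrow> real \<Rightarrow> ennreal" where
  "pred_den n \<pi> xb s =
     (\<integral>\<^sup>+ \<eta>. indicator {0<..} \<eta> *
        (\<integral>\<^sup>+ \<mu>. ennreal (gauss_dens xb \<mu> (1 / (real n * \<eta>)) * \<eta>
                   * chisq_dens (real (n - 1) * real CARD('d)) (\<eta> * s)) * \<pi> \<mu> \<eta> \<partial>lborel) \<partial>lborel)"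

definition bayes_pred :: "nat \<Rightarrow> (real^'d \<Rightarrow> real \<Rightarrow> ennreal) \<Rightarrow> real^'d \<Rightarrow> real^'d \<Rightarrow> real \<Rightarrow> real" where
  "bayes_pred n \<pi> y xb s = enn2real (pred_num n \<pi> y xb s) / enn2real (pred_den n \<pi> xb s)"

definition pred_R :: "nat \<Rightarrow> real^'d \<Rightarrow> real^'d \<Rightarrow> real \<Rightarrow> real" where
  "pred_R n y xb s =
     Gamma (real n * real CARD('d) / 2) / Gamma (real (n - 1) * real CARD('d) / 2)
     * (1 / (pi * s) * (real n / (real n + 1))) powr (real CARD('d) / 2)
     * (1 + 1 / s * (real n / (real n + 1)) * (norm (y - xb))\<^sup>2) powr (- real n * real CARD('d) / 2)"

definition prior_GM :: "real \<Rightarrow> (real \<Rightarrow> real) \<Rightarrow> real^'d \<Rightarrow> real \<Rightarrow> ennreal" where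
  "prior_GM a f \<mu> \<eta> =
     (\<integral>\<^sup>+ u. indicator {0<..<1} u *
        ennreal (gauss_dens \<mu> 0 ((1 - u) / (\<eta> * u)) * \<eta> powr a * u powr a * f u) \<partial>lborel)"

definition J_GM :: "real \<Rightarrow> real \<Rightarrow> (real \<Rightarrow> real) \<Rightarrow> nat \<Rightarrow> real \<Rightarrow> real" where
  "J_GM d \<nu> f l w =
     enn2real (\<integral>\<^sup>+ u. indicator {0<..<1} u *
        ennreal (u powr (\<nu> - 1) * (1 + (real l - 1) * u) powr (d / 2 - \<nu> - 1)
                 / (1 + w * u) powr ((real l - 1) * d / 2 + \<nu>)
                 * f (real l * u / (1 + (real l - 1) * u))) \<partial>lborel)"

end

theory Submission
  imports Defs "HOL-Probability.Distributions"
begin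

text \<open>Write the prior as a mixture over \<open>\<lambda>\<close>. For a sample of size \<open>l\<close> with mean \<open>z\<close>
  and sum of squares \<open>S\<close>, the \<open>\<mu>\<close>-integral of the likelihood against the prior is a
  Gaussian convolution and the subsequent \<open>\<eta>\<close>-integral is a Gamma integral, which leaves a
  one-dimensional integral over \<open>\<lambda>\<close>; the substitution \<open>\<lambda> = l t / (1 + (l - 1) t)\<close>
  turns it into \<open>J\<^sub>l\<close>. The denominator of the predictive density is this integral for
  the observed sample (size \<open>n\<close>); completing the square in \<open>\<mu>\<close> shows that the numerator
  is the one for the sample augmented by \<open>y\<close> (size \<open>n + 1\<close>). In the ratio the Gamma
  functions combine into the Beta functions and \<open>p\<^sub>R\<close>.\<close>

section \<open>Gaussian densities\<close>

lemma gauss_dens_nonneg [simp]: "gauss_dens y c \<tau> \<ge> 0"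
  unfolding gauss_dens_def by simp

lemma gauss_dens_commute: "gauss_dens p q \<tau> = gauss_dens q p \<tau>"
  unfolding gauss_dens_def by (simp add: norm_minus_commute)

lemma borel_measurable_gauss_dens[measurable (raw)]:
  assumes [measurable]: "A \<in> borel_measurable M" "B \<in> borel_measurable M" "C \<in> borel_measurable M"
  shows "(\<lambda>x. gauss_dens (A x) (B x) (C x)) \<in> borel_measurable M"
  unfolding gauss_dens_def by measurable

lemma power2_norm_eq_sum_Basis: "(norm v)\<^sup>2 = (\<Sum>b\<in>Basis. (v \<bullet> b)\<^sup>2)"
  for v :: "'a::euclidean_space"
  unfolding power2_norm_eq_inner by (subst euclidean_inner) (simp add: power2_eq_square)

lemma gauss_dens_eq_prod_normal_density:
  fixes \<mu> c :: "real^'d"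
  assumes "\<tau> > 0"
  shows "gauss_dens \<mu> c \<tau> = (\<Prod>b\<in>Basis. normal_density (c \<bullet> b) (sqrt \<tau>) (\<mu> \<bullet> b))"
proof -
  have "(\<Prod>b\<in>Basis. normal_density (c \<bullet> b) (sqrt \<tau>) (\<mu> \<bullet> b))
      = (\<Prod>b\<in>(Basis::(real^'d) set). (2*pi*\<tau>) powr (-1/2) * exp (- (\<mu> \<bullet> b - c \<bullet> b)\<^sup>2 / (2*\<tau>)))"
    using assms
    by (intro prod.cong) (auto simp: normal_density_def powr_minus_divide powr_half_sqrt
        power2_commute[of "\<mu> \<bullet> _"])
  also have "\<dots> = ((2*pi*\<tau>) powr (-1/2)) ^ CARD('d)
      * exp (\<Sum>b\<in>(Basis::(real^'d) set). - (\<mu> \<bullet> b - c \<bullet> b)\<^sup>2 / (2*\<tau>))"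
    by (simp add: prod.distrib exp_sum)
  also have "\<dots> = gauss_dens \<mu> c \<tau>"
    unfolding gauss_dens_def power2_norm_eq_sum_Basis[of "\<mu> - c"] using assms
    by (simp add: inner_diff_left powr_realpow[symmetric] powr_powr
        sum_divide_distrib[symmetric] sum_negf)
  finally show ?thesis ..
qed

lemma nn_integral_normal_density:
  assumes "\<sigma> > 0"
  shows "(\<integral>\<^sup>+x. ennreal (normal_density m \<sigma> x) \<partial>lborel) = 1"
  using integral_normal_density[OF assms]
  by (subst nn_integral_eq_integral) (auto intro: integrable_normal_density[OF assms])

lemma nn_integral_gauss_dens:
  fixes c :: "real^'d"
  assumes "\<tau> > 0"
  shows "(\<integral>\<^sup>+\<mu>. ennreal (gauss_dens \<mu> c \<tau>) \<partial>lborel) = 1"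
  using assms
  by (simp add: gauss_dens_eq_prod_normal_density prod_ennreal[symmetric])
    (subst nn_integral_lborel_prod, auto simp: nn_integral_normal_density)

lemma complete_square_weighted:
  fixes a b x t1 t2 :: real
  assumes "t1 > 0" "t2 > 0"
  shows "(a - x)\<^sup>2 / t1 + (b - x)\<^sup>2 / t2 = (a - b)\<^sup>2 / (t1 + t2)
     + (x - (t2 / (t1 + t2) * a + t1 / (t1 + t2) * b))\<^sup>2 / (t1 * t2 / (t1 + t2))"
proof -
  define T where "T = t1 + t2"
  have T: "T > 0" using assms by (simp add: T_def)
  have poly: "T * t2 * (a - x)\<^sup>2 + T * t1 * (b - x)\<^sup>2
      = t1 * t2 * (a - b)\<^sup>2 + (T * x - t2 * a - t1 * b)\<^sup>2"
    unfolding T_def by (simp add: power2_eq_square algebra_simps)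
  have "x - (t2 / T * a + t1 / T * b) = (T * x - t2 * a - t1 * b) / T"
    using T by (simp add: field_simps)
  moreover have "(a - x)\<^sup>2 / t1 + (b - x)\<^sup>2 / t2
      = (T * t2 * (a - x)\<^sup>2 + T * t1 * (b - x)\<^sup>2) / (T * t1 * t2)"
    using assms T by (simp add: field_simps)
  moreover have "(t1 * t2 * (a - b)\<^sup>2 + (T * x - t2 * a - t1 * b)\<^sup>2) / (T * t1 * t2)
      = (a - b)\<^sup>2 / T + ((T * x - t2 * a - t1 * b) / T)\<^sup>2 / (t1 * t2 / T)"
    using assms T by (simp add: field_simps power2_eq_square)
  ultimately show ?thesis
    unfolding T_def[symmetric] poly by simp
qed

lemma gauss_dens_mult:
  fixes p q \<mu> :: "real^'d"
  assumes "t1 > 0" "t2 > 0"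
  shows "gauss_dens p \<mu> t1 * gauss_dens q \<mu> t2 = gauss_dens p q (t1 + t2)
     * gauss_dens \<mu> ((t2 / (t1 + t2)) *\<^sub>R p + (t1 / (t1 + t2)) *\<^sub>R q) (t1 * t2 / (t1 + t2))"
proof -
  have norms: "(norm (p - \<mu>))\<^sup>2 / t1 + (norm (q - \<mu>))\<^sup>2 / t2 = (norm (p - q))\<^sup>2 / (t1 + t2)
     + (norm (\<mu> - ((t2 / (t1 + t2)) *\<^sub>R p + (t1 / (t1 + t2)) *\<^sub>R q)))\<^sup>2 / (t1 * t2 / (t1 + t2))"
    unfolding power2_norm_eq_sum_Basis sum_divide_distrib sum.distrib[symmetric]
    by (intro sum.cong refl)
      (simp add: inner_diff_left inner_add_left complete_square_weighted[OF assms])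
  have "(2 * pi * t1) powr e * (2 * pi * t2) powr e
      = (2 * pi * (t1 + t2)) powr e * (2 * pi * (t1 * t2 / (t1 + t2))) powr e" for e
  proof -
    have "(2 * pi * (t1 + t2)) * (2 * pi * (t1 * t2 / (t1 + t2))) = (2 * pi * t1) * (2 * pi * t2)"
      using assms by (simp add: field_simps)
    then show ?thesis
      using assms by (subst (1 2) powr_mult[symmetric]) (simp_all add: mult_ac)
  qed
  moreover have "exp (- (norm (p - \<mu>))\<^sup>2 / (2 * t1)) * exp (- (norm (q - \<mu>))\<^sup>2 / (2 * t2))
     = exp (- (norm (p - q))\<^sup>2 / (2 * (t1 + t2)))
       * exp (- (norm (\<mu> - ((t2 / (t1 + t2)) *\<^sub>R p + (t1 / (t1 + t2)) *\<^sub>R q)))\<^sup>2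
              / (2 * (t1 * t2 / (t1 + t2))))"
  proof -
    have "- u / (2 * t) = - (u / t) / 2" "- u / 2 + - v / 2 = - (u + v) / 2" for u v t :: real
      by simp_all
    then show ?thesis
      unfolding exp_add[symmetric] by (simp only: norms)
  qed
  ultimately show ?thesis
    unfolding gauss_dens_def by (metis (no_types, lifting) mult.commute mult.left_commute)
qed

lemma nn_integral_gauss_dens_convolution:
  fixes z c :: "real^'d"
  assumes "t1 > 0" "t2 > 0"
  shows "(\<integral>\<^sup>+\<mu>. ennreal (gauss_dens z \<mu> t1 * gauss_dens \<mu> c t2) \<partial>lborel)
    = ennreal (gauss_dens z c (t1 + t2))"
proof -
  define m where "m = (t2 / (t1 + t2)) *\<^sub>R z + (t1 / (t1 + t2)) *\<^sub>R c"
  have "gauss_dens z \<mu> t1 * gauss_dens \<mu> c t2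
      = gauss_dens z c (t1 + t2) * gauss_dens \<mu> m (t1 * t2 / (t1 + t2))" for \<mu>
    using gauss_dens_mult[OF assms, of z \<mu> c] by (simp add: gauss_dens_commute[of \<mu> c] m_def)
  then have "(\<integral>\<^sup>+\<mu>. ennreal (gauss_dens z \<mu> t1 * gauss_dens \<mu> c t2) \<partial>lborel)
      = (\<integral>\<^sup>+\<mu>. ennreal (gauss_dens z c (t1 + t2)) * ennreal (gauss_dens \<mu> m (t1 * t2 / (t1 + t2))) \<partial>lborel)"
    by (simp add: ennreal_mult)
  also have "\<dots> = ennreal (gauss_dens z c (t1 + t2))"
    using assms by (simp add: nn_integral_cmult nn_integral_gauss_dens)
  finally show ?thesis .
qed

section \<open>Gamma integrals and a change of variables on \<open>(0, 1)\<close>\<close>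

lemma ennreal_cmult_indicator:
  "c \<ge> 0 \<Longrightarrow> ennreal c * (indicator A x * ennreal y) = indicator A x * ennreal (c * y)"
  by (simp add: ennreal_mult' mult_ac)

lemma nn_integral_gamma_kernel:
  fixes p c :: real
  assumes p: "p > -1" and c: "c > 0"
  shows "(\<integral>\<^sup>+\<eta>. indicator {0<..} \<eta> * ennreal (\<eta> powr p * exp (- c * \<eta>)) \<partial>lborel)
        = ennreal (Gamma (p + 1) / c powr (p + 1))"
proof -
  define I where "I = (\<integral>\<^sup>+\<eta>. indicator {0<..} \<eta> * ennreal (\<eta> powr p * exp (- c * \<eta>)) \<partial>lborel)"
  have "ennreal (Gamma (p + 1))
      = (\<integral>\<^sup>+t. ennreal (indicator {0..} t * t powr (p + 1 - 1) / exp t) \<partial>lborel)"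
    using Gamma_conv_nn_integral_real[of "p + 1"] p by simp
  also have "\<dots> = ennreal \<bar>c\<bar> * (\<integral>\<^sup>+x. ennreal (indicator {0..} (0 + c * x)
      * (0 + c * x) powr (p + 1 - 1) / exp (0 + c * x)) \<partial>lborel)"
    by (rule nn_integral_real_affine) (use c in auto)
  also have "(\<integral>\<^sup>+x. ennreal (indicator {0..} (0 + c * x) * (0 + c * x) powr (p + 1 - 1)
      / exp (0 + c * x)) \<partial>lborel)
      = (\<integral>\<^sup>+x. ennreal (c powr p) * (indicator {0<..} x * ennreal (x powr p * exp (- c * x))) \<partial>lborel)"
  proof (intro nn_integral_cong)
    fix x :: real
    show "ennreal (indicator {0..} (0 + c * x) * (0 + c * x) powr (p + 1 - 1) / exp (0 + c * x))
      = ennreal (c powr p) * (indicator {0<..} x * ennreal (x powr p * exp (- c * x)))"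
    proof (cases "x > 0")
      case True
      then show ?thesis using c
        by (simp add: powr_mult ennreal_mult[symmetric] exp_minus field_simps)
    next
      case False
      then show ?thesis using c
        by (auto simp: indicator_def zero_le_mult_iff)
    qed
  qed
  also have "\<dots> = ennreal (c powr p) * I"
    unfolding I_def by (rule nn_integral_cmult) auto
  finally have "ennreal (Gamma (p + 1)) = ennreal \<bar>c\<bar> * (ennreal (c powr p) * I)" .
  then have Gamma_eq: "ennreal (Gamma (p + 1)) = ennreal (c powr (p + 1)) * I"
    using c by (simp add: powr_add ennreal_mult mult_ac)
  have "ennreal (Gamma (p + 1) / c powr (p + 1)) = ennreal (1 / c powr (p + 1)) * ennreal (Gamma (p + 1))"
    by (subst ennreal_mult'[symmetric]) (use c in simp_all)
  also have "\<dots> = ennreal (1 / c powr (p + 1) * c powr (p + 1)) * I"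
    unfolding Gamma_eq using c by (subst ennreal_mult) (auto simp: mult.assoc)
  also have "\<dots> = I"
    using c by simp
  finally show ?thesis unfolding I_def ..
qed

lemma gauss_dens_zero_scale:
  fixes z :: "real^'d"
  assumes "V > 0" "\<eta> > 0"
  shows "gauss_dens z 0 (V / \<eta>) = (2 * pi * V) powr (- real CARD('d) / 2)
     * \<eta> powr (real CARD('d) / 2) * exp (- ((norm z)\<^sup>2 / (2 * V)) * \<eta>)"
proof -
  define e where "e = - real CARD('d) / 2"
  have "(2 * pi * (V / \<eta>)) powr e = (2 * pi * V) powr e / \<eta> powr e"
    using assms by (simp add: powr_divide)
  also have "\<dots> = (2 * pi * V) powr e * \<eta> powr (- e)"
    by (simp add: powr_minus divide_inverse)
  finally have "(2 * pi * (V / \<eta>)) powr (- real CARD('d) / 2)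
      = (2 * pi * V) powr (- real CARD('d) / 2) * \<eta> powr (real CARD('d) / 2)"
    by (simp add: e_def)
  moreover have "- (norm (z - 0))\<^sup>2 / (2 * (V / \<eta>)) = - ((norm z)\<^sup>2 / (2 * V)) * \<eta>"
    using assms by simp
  ultimately show ?thesis
    unfolding gauss_dens_def by simp
qed

lemma nn_integral_gamma_gauss_dens:
  fixes z :: "real^'d"
  assumes K: "K \<ge> 0" and V: "V > 0" and S: "S > 0" and p: "p + real CARD('d) / 2 > -1"
  defines "e \<equiv> p + real CARD('d) / 2 + 1"
  shows "(\<integral>\<^sup>+\<eta>. indicator {0<..} \<eta>
      * ennreal (K * (\<eta> powr p * exp (- \<eta> * S / 2) * gauss_dens z 0 (V / \<eta>))) \<partial>lborel)
    = ennreal (K * ((2 * pi * V) powr (- real CARD('d) / 2)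
        * (Gamma e / (S / 2 + (norm z)\<^sup>2 / (2 * V)) powr e)))"
proof -
  define C where "C = K * (2 * pi * V) powr (- real CARD('d) / 2)"
  have C: "C \<ge> 0" using K by (simp add: C_def)
  define c where "c = S / 2 + (norm z)\<^sup>2 / (2 * V)"
  have c: "c > 0" using S V by (simp add: c_def add_pos_nonneg)
  have integrand: "K * (\<eta> powr p * exp (- \<eta> * S / 2) * gauss_dens z 0 (V / \<eta>))
      = C * (\<eta> powr (e - 1) * exp (- c * \<eta>))" if "\<eta> > 0" for \<eta>
    using that
    by (simp add: gauss_dens_zero_scale[OF V that] C_def c_def e_def powr_add
        mult_exp_exp algebra_simps)
  have "(\<integral>\<^sup>+\<eta>. indicator {0<..} \<eta>
      * ennreal (K * (\<eta> powr p * exp (- \<eta> * S / 2) * gauss_dens z 0 (V / \<eta>))) \<partial>lborel)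
      = (\<integral>\<^sup>+\<eta>. ennreal C * (indicator {0<..} \<eta> * ennreal (\<eta> powr (e - 1) * exp (- c * \<eta>))) \<partial>lborel)"
  proof (intro nn_integral_cong)
    fix \<eta> :: real
    show "indicator {0<..} \<eta> * ennreal (K * (\<eta> powr p * exp (- \<eta> * S / 2) * gauss_dens z 0 (V / \<eta>)))
        = ennreal C * (indicator {0<..} \<eta> * ennreal (\<eta> powr (e - 1) * exp (- c * \<eta>)))"
    proof (cases "\<eta> > 0")
      case True
      then show ?thesis by (simp only: integrand[OF True] ennreal_cmult_indicator[OF C])
    qed simp
  qed
  also have "\<dots> = ennreal C * ennreal (Gamma e / c powr e)"
    using nn_integral_gamma_kernel[of "e - 1" c] p c by (simp add: nn_integral_cmult e_def)
  also have "\<dots> = ennreal (C * (Gamma e / c powr e))"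
    by (rule ennreal_mult'[OF C, symmetric])
  finally show ?thesis
    by (simp add: C_def c_def mult.assoc)
qed

lemma nn_integral_unit_interval_moebius_subst:
  fixes G :: "real \<Rightarrow> real" and m :: real
  assumes m: "m \<ge> 1" and G[measurable]: "G \<in> borel_measurable borel"
  shows "(\<integral>\<^sup>+u. indicator {0<..<1} u * ennreal (G u) \<partial>lborel)
    = (\<integral>\<^sup>+t. indicator {0<..<1} t
        * ennreal (G (m * t / (1 + (m - 1) * t)) * (m / (1 + (m - 1) * t)\<^sup>2)) \<partial>lborel)"
proof -
  define g where "g t = m * t / (1 + (m - 1) * t)" for t
  define g' where "g' t = m / (1 + (m - 1) * t)\<^sup>2" for t
  define F where "F u = indicator {0<..<1} u * G u" for u
  have pos: "1 + (m - 1) * t > 0" if "t \<ge> 0" for t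
    using m that by (simp add: add_pos_nonneg)
  have g_0: "g 0 = 0" and g_1: "g 1 = 1"
    using m by (auto simp: g_def)
  have deriv: "(g has_real_derivative g' t) (at t)" if "t \<in> {0..1}" for t
  proof -
    have q: "1 + (m - 1) * t \<noteq> 0" using pos[of t] that by auto
    have "(g has_real_derivative
        ((m * (1 + (m - 1) * t) - m * t * (m - 1)) / (1 + (m - 1) * t)\<^sup>2)) (at t)"
      unfolding g_def power2_eq_square by (rule derivative_eq_intros refl | use q in simp)+
    moreover have "m * (1 + (m - 1) * t) - m * t * (m - 1) = m" by (simp add: algebra_simps)
    ultimately show ?thesis by (simp add: g'_def)
  qed
  have cont: "continuous_on {0..1} g'"
    unfolding g'_def by (intro continuous_intros) (use pos in force)
  have g_mem: "g t \<in> {0<..<1} \<longleftrightarrow> t \<in> {0<..<1}" if "t \<in> {0..1}" for t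
  proof -
    have q: "1 + (m - 1) * t > 0" using pos[of t] that by auto
    have "g t > 0 \<longleftrightarrow> t > 0"
      using q m that by (auto simp: g_def zero_less_divide_iff zero_less_mult_iff)
    moreover have "g t < 1 \<longleftrightarrow> t < 1"
      using q m that by (simp add: g_def divide_less_eq algebra_simps)
    ultimately show ?thesis by auto
  qed
  have "(\<integral>\<^sup>+u. indicator {0<..<1} u * ennreal (G u) \<partial>lborel)
      = (\<integral>\<^sup>+x. F x * indicator {g 0..g 1} x \<partial>lborel)"
    using g_0 g_1 by (intro nn_integral_cong) (auto simp: F_def indicator_def)
  also have "\<dots> = (\<integral>\<^sup>+x. F (g x) * g' x * indicator {0..1} x \<partial>lborel)"
    using m
    by (intro nn_integral_substitution[OF _ deriv cont])
      (simp_all add: g'_def F_def set_borel_measurable_def)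
  also have "\<dots> = (\<integral>\<^sup>+t. indicator {0<..<1} t * ennreal (G (g t) * g' t) \<partial>lborel)"
  proof (intro nn_integral_cong)
    fix t :: real
    show "ennreal (F (g t) * g' t * indicator {0..1} t) = indicator {0<..<1} t * ennreal (G (g t) * g' t)"
      using g_mem[of t] by (cases "t \<in> {0..1}") (auto simp: F_def indicator_def)
  qed
  finally show ?thesis by (simp add: g_def g'_def)
qed

section \<open>The marginal likelihood under the prior\<close>

lemma nn_integral_gauss_dens_prior_GM:
  fixes z :: "real^'d" and h :: "real \<Rightarrow> real"
  assumes \<tau>: "\<tau> > 0" and \<eta>: "\<eta> > 0"
    and h[measurable]: "h \<in> borel_measurable borel" and h_nonneg: "\<And>u. h u \<ge> 0"
  shows "(\<integral>\<^sup>+\<mu>. ennreal (gauss_dens z \<mu> \<tau>) * prior_GM a h \<mu> \<eta> \<partial>lborel)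
    = (\<integral>\<^sup>+u. indicator {0<..<1} u
        * ennreal (gauss_dens z 0 (\<tau> + (1 - u) / (\<eta> * u)) * \<eta> powr a * u powr a * h u) \<partial>lborel)"
proof -
  let ?B = "\<lambda>\<mu> u. indicator {0<..<1} u
    * ennreal (gauss_dens \<mu> 0 ((1 - u) / (\<eta> * u)) * \<eta> powr a * u powr a * h u)"
  have "(\<integral>\<^sup>+\<mu>. ennreal (gauss_dens z \<mu> \<tau>) * prior_GM a h \<mu> \<eta> \<partial>lborel)
      = (\<integral>\<^sup>+\<mu>. (\<integral>\<^sup>+u. ennreal (gauss_dens z \<mu> \<tau>) * ?B \<mu> u \<partial>lborel) \<partial>lborel)"
    unfolding prior_GM_def by (intro nn_integral_cong nn_integral_cmult[symmetric]) measurable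
  also have "\<dots> = (\<integral>\<^sup>+u. (\<integral>\<^sup>+\<mu>. ennreal (gauss_dens z \<mu> \<tau>) * ?B \<mu> u \<partial>lborel) \<partial>lborel)"
    by (rule lborel_pair.Fubini'[where f = "\<lambda>u \<mu>. ennreal (gauss_dens z \<mu> \<tau>) * ?B \<mu> u"])
      measurable
  also have "\<dots> = (\<integral>\<^sup>+u. indicator {0<..<1} u
      * ennreal (gauss_dens z 0 (\<tau> + (1 - u) / (\<eta> * u)) * \<eta> powr a * u powr a * h u) \<partial>lborel)"
  proof (intro nn_integral_cong)
    fix u :: real
    show "(\<integral>\<^sup>+\<mu>. ennreal (gauss_dens z \<mu> \<tau>) * ?B \<mu> u \<partial>lborel) = indicator {0<..<1} u
      * ennreal (gauss_dens z 0 (\<tau> + (1 - u) / (\<eta> * u)) * \<eta> powr a * u powr a * h u)"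
    proof (cases "u \<in> {0<..<1}")
      case True
      define c where "c = \<eta> powr a * u powr a * h u"
      have c: "c \<ge> 0" using h_nonneg[of u] by (simp add: c_def)
      have t2: "(1 - u) / (\<eta> * u) > 0" using True \<eta> by simp
      have "ennreal (gauss_dens z \<mu> \<tau>) * ?B \<mu> u
          = ennreal c * ennreal (gauss_dens z \<mu> \<tau> * gauss_dens \<mu> 0 ((1 - u) / (\<eta> * u)))" for \<mu>
      proof -
        have "ennreal (gauss_dens z \<mu> \<tau>) * ?B \<mu> u = ennreal (gauss_dens z \<mu> \<tau>
            * (gauss_dens \<mu> 0 ((1 - u) / (\<eta> * u)) * \<eta> powr a * u powr a * h u))"
          using True by (simp add: ennreal_mult'[OF gauss_dens_nonneg])
        also have "\<dots> = ennreal (c * (gauss_dens z \<mu> \<tau> * gauss_dens \<mu> 0 ((1 - u) / (\<eta> * u))))"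
          by (rule arg_cong[where f = ennreal]) (simp add: c_def mult_ac)
        finally show ?thesis
          by (simp only: ennreal_mult'[OF c])
      qed
      then have "(\<integral>\<^sup>+\<mu>. ennreal (gauss_dens z \<mu> \<tau>) * ?B \<mu> u \<partial>lborel)
          = ennreal c * ennreal (gauss_dens z 0 (\<tau> + (1 - u) / (\<eta> * u)))"
        by (simp add: nn_integral_cmult nn_integral_gauss_dens_convolution[OF \<tau> t2])
      also have "\<dots> = ennreal (gauss_dens z 0 (\<tau> + (1 - u) / (\<eta> * u)) * c)"
        by (simp only: ennreal_mult'[OF c, symmetric] mult.commute)
      finally show ?thesis
        using True by (simp add: c_def mult_ac)
    qed simp
  qed
  finally show ?thesis .
qed

text \<open>Up to the factor \<open>K\<close>, the marginal likelihood under \<open>\<pi>\<close> of a sample of size \<open>l\<close>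
  with mean \<open>z\<close> and sum of squares \<open>S\<close>.\<close>

definition marginal_lik :: "real \<Rightarrow> nat \<Rightarrow> (real^'d \<Rightarrow> real \<Rightarrow> ennreal) \<Rightarrow> real^'d \<Rightarrow> real \<Rightarrow> ennreal"
  where "marginal_lik K l \<pi> z S =
    (\<integral>\<^sup>+\<eta>. indicator {0<..} \<eta> *
      (\<integral>\<^sup>+\<mu>. ennreal (K * gauss_dens z \<mu> (1 / (real l * \<eta>))
          * (\<eta> powr ((real l - 1) * real CARD('d) / 2) * exp (- \<eta> * S / 2))) * \<pi> \<mu> \<eta> \<partial>lborel) \<partial>lborel)"

lemma nn_integral_marginal_kernel_prior_GM:
  fixes z :: "real^'d" and h :: "real \<Rightarrow> real"
  assumes l: "l \<ge> 1" and \<eta>: "\<eta> > 0" and K: "K \<ge> 0"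
    and h[measurable]: "h \<in> borel_measurable borel" and h_nonneg: "\<And>u. h u \<ge> 0"
  shows "(\<integral>\<^sup>+\<mu>. ennreal (K * gauss_dens z \<mu> (1 / (real l * \<eta>)) * (\<eta> powr k * exp (- \<eta> * S / 2)))
        * prior_GM a h \<mu> \<eta> \<partial>lborel)
    = (\<integral>\<^sup>+u. indicator {0<..<1} u * ennreal (K * u powr a * h u * (\<eta> powr (k + a)
        * exp (- \<eta> * S / 2) * gauss_dens z 0 ((1 / real l + (1 - u) / u) / \<eta>))) \<partial>lborel)"
proof -
  define E where "E = K * (\<eta> powr k * exp (- \<eta> * S / 2))"
  have E: "E \<ge> 0" using K by (simp add: E_def)
  have "(\<integral>\<^sup>+\<mu>. ennreal (K * gauss_dens z \<mu> (1 / (real l * \<eta>)) * (\<eta> powr k * exp (- \<eta> * S / 2)))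
        * prior_GM a h \<mu> \<eta> \<partial>lborel)
      = (\<integral>\<^sup>+\<mu>. ennreal E * (ennreal (gauss_dens z \<mu> (1 / (real l * \<eta>))) * prior_GM a h \<mu> \<eta>) \<partial>lborel)"
  proof (intro nn_integral_cong)
    fix \<mu> :: "real^'d"
    have "K * gauss_dens z \<mu> (1 / (real l * \<eta>)) * (\<eta> powr k * exp (- \<eta> * S / 2))
        = E * gauss_dens z \<mu> (1 / (real l * \<eta>))"
      by (simp add: E_def)
    then show "ennreal (K * gauss_dens z \<mu> (1 / (real l * \<eta>)) * (\<eta> powr k * exp (- \<eta> * S / 2)))
        * prior_GM a h \<mu> \<eta> = ennreal E * (ennreal (gauss_dens z \<mu> (1 / (real l * \<eta>))) * prior_GM a h \<mu> \<eta>)"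
      by (simp only: ennreal_mult'[OF E] mult.assoc)
  qed
  also have "\<dots> = ennreal E * (\<integral>\<^sup>+\<mu>. ennreal (gauss_dens z \<mu> (1 / (real l * \<eta>))) * prior_GM a h \<mu> \<eta> \<partial>lborel)"
    unfolding prior_GM_def by (rule nn_integral_cmult) measurable
  also have "\<dots> = ennreal E * (\<integral>\<^sup>+u. indicator {0<..<1} u * ennreal (gauss_dens z 0
      (1 / (real l * \<eta>) + (1 - u) / (\<eta> * u)) * \<eta> powr a * u powr a * h u) \<partial>lborel)"
    using l \<eta> by (subst nn_integral_gauss_dens_prior_GM[OF _ \<eta> h h_nonneg]) simp_all
  also have "\<dots> = (\<integral>\<^sup>+u. ennreal E * (indicator {0<..<1} u * ennreal (gauss_dens z 0
      (1 / (real l * \<eta>) + (1 - u) / (\<eta> * u)) * \<eta> powr a * u powr a * h u)) \<partial>lborel)"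
    by (rule nn_integral_cmult[symmetric]) measurable
  also have "\<dots> = (\<integral>\<^sup>+u. indicator {0<..<1} u * ennreal (K * u powr a * h u * (\<eta> powr (k + a)
        * exp (- \<eta> * S / 2) * gauss_dens z 0 ((1 / real l + (1 - u) / u) / \<eta>))) \<partial>lborel)"
  proof (intro nn_integral_cong)
    fix u :: real
    have "1 / (real l * \<eta>) + (1 - u) / (\<eta> * u) = (1 / real l + (1 - u) / u) / \<eta>"
      using \<eta> by (cases "u = 0") (simp_all add: field_simps)
    then have "E * (gauss_dens z 0 (1 / (real l * \<eta>) + (1 - u) / (\<eta> * u)) * \<eta> powr a * u powr a * h u)
        = K * u powr a * h u * (\<eta> powr (k + a) * exp (- \<eta> * S / 2)
          * gauss_dens z 0 ((1 / real l + (1 - u) / u) / \<eta>))"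
      using \<eta> by (simp add: E_def powr_add mult_ac)
    then show "ennreal E * (indicator {0<..<1} u * ennreal (gauss_dens z 0
        (1 / (real l * \<eta>) + (1 - u) / (\<eta> * u)) * \<eta> powr a * u powr a * h u))
      = indicator {0<..<1} u * ennreal (K * u powr a * h u * (\<eta> powr (k + a)
        * exp (- \<eta> * S / 2) * gauss_dens z 0 ((1 / real l + (1 - u) / u) / \<eta>)))"
      by (simp only: ennreal_cmult_indicator[OF E])
  qed
  finally show ?thesis .
qed

lemma marginal_lik_prior_GM_eq_mixture:
  fixes z :: "real^'d" and h :: "real \<Rightarrow> real"
  assumes l: "l \<ge> 1" and S: "S > 0" and K: "K \<ge> 0"
    and h[measurable]: "h \<in> borel_measurable borel" and h_nonneg: "\<And>u. h u \<ge> 0"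
    and \<nu>: "\<nu> = real CARD('d) / 2 + a + 1" "\<nu> > 0"
  defines "k \<equiv> (real l - 1) * real CARD('d) / 2"
  defines "V \<equiv> \<lambda>u. 1 / real l + (1 - u) / u"
  shows "marginal_lik K l (prior_GM a h) z S
    = (\<integral>\<^sup>+u. indicator {0<..<1} u * ennreal (K * u powr a * h u * ((2 * pi * V u) powr (- real CARD('d) / 2)
        * (Gamma (k + \<nu>) / (S / 2 + (norm z)\<^sup>2 / (2 * V u)) powr (k + \<nu>)))) \<partial>lborel)"
proof -
  let ?F = "\<lambda>\<eta> u. indicator {0<..} \<eta> * (indicator {0<..<1} u * ennreal (K * u powr a * h u
    * (\<eta> powr (k + a) * exp (- \<eta> * S / 2) * gauss_dens z 0 (V u / \<eta>))))"
  have k: "k \<ge> 0" using l by (simp add: k_def)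
  have "marginal_lik K l (prior_GM a h) z S = (\<integral>\<^sup>+\<eta>. (\<integral>\<^sup>+u. ?F \<eta> u \<partial>lborel) \<partial>lborel)"
    unfolding marginal_lik_def k_def[symmetric]
  proof (intro nn_integral_cong)
    fix \<eta> :: real
    show "indicator {0<..} \<eta> * (\<integral>\<^sup>+\<mu>. ennreal (K * gauss_dens z \<mu> (1 / (real l * \<eta>))
        * (\<eta> powr k * exp (- \<eta> * S / 2))) * prior_GM a h \<mu> \<eta> \<partial>lborel) = (\<integral>\<^sup>+u. ?F \<eta> u \<partial>lborel)"
    proof (cases "\<eta> > 0")
      case True
      then show ?thesis
        unfolding nn_integral_marginal_kernel_prior_GM[OF l True K h h_nonneg] V_def by simp
    qed simp
  qed
  also have "\<dots> = (\<integral>\<^sup>+u. (\<integral>\<^sup>+\<eta>. ?F \<eta> u \<partial>lborel) \<partial>lborel)"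
    unfolding V_def by (rule lborel_pair.Fubini') measurable
  also have "\<dots> = (\<integral>\<^sup>+u. indicator {0<..<1} u * ennreal (K * u powr a * h u * ((2 * pi * V u) powr (- real CARD('d) / 2)
        * (Gamma (k + \<nu>) / (S / 2 + (norm z)\<^sup>2 / (2 * V u)) powr (k + \<nu>)))) \<partial>lborel)"
  proof (intro nn_integral_cong)
    fix u :: real
    show "(\<integral>\<^sup>+\<eta>. ?F \<eta> u \<partial>lborel) = indicator {0<..<1} u * ennreal (K * u powr a * h u
        * ((2 * pi * V u) powr (- real CARD('d) / 2)
        * (Gamma (k + \<nu>) / (S / 2 + (norm z)\<^sup>2 / (2 * V u)) powr (k + \<nu>))))"
    proof (cases "u \<in> {0<..<1}")
      case True
      have c: "K * u powr a * h u \<ge> 0" using K h_nonneg[of u] by simp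
      have V: "V u > 0" using True l by (simp add: V_def add_pos_nonneg)
      have p: "k + a + real CARD('d) / 2 > -1" and e: "k + a + real CARD('d) / 2 + 1 = k + \<nu>"
        using k \<nu> by simp_all
      show ?thesis
        using True nn_integral_gamma_gauss_dens[OF c V S p, of z, unfolded e] by simp
    qed simp
  qed
  finally show ?thesis .
qed

lemma GM_mixture_integrand_moebius:
  fixes m t d a k S zz K H :: real
  assumes m: "m \<ge> 1" and t: "0 < t" "t < 1" and S: "S > 0" and zz: "zz \<ge> 0"
    and \<nu>: "\<nu> = d / 2 + a + 1"
  defines "q \<equiv> 1 + (m - 1) * t"
  defines "u \<equiv> m * t / q"
  defines "V \<equiv> 1 / m + (1 - u) / u"
  shows "K * u powr a * H * ((2 * pi * V) powr (- d / 2)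
        * (Gamma (k + \<nu>) / (S / 2 + zz / (2 * V)) powr (k + \<nu>))) * (m / q\<^sup>2)
     = K * (m powr \<nu> * (2 * pi) powr (- d / 2) * Gamma (k + \<nu>) * (2 / S) powr (k + \<nu>))
       * (t powr (\<nu> - 1) * q powr (d / 2 - \<nu> - 1) / (1 + (m * zz / S) * t) powr (k + \<nu>) * H)"
proof -
  have q: "q > 0" unfolding q_def using m t by (simp add: add_pos_nonneg)
  have mt: "m * t > 0" using m t by simp
  have u: "u > 0" unfolding u_def using q mt by simp
  have V: "V = 1 / (m * t)"
  proof -
    have "(1 - u) / u = 1 / u - 1" using u by (simp add: diff_divide_distrib)
    moreover have "1 / u = q / (m * t)" unfolding u_def by simp
    moreover have "1 / m + q / (m * t) - 1 = 1 / (m * t)"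
      unfolding q_def using m t by (simp add: field_simps)
    ultimately show ?thesis unfolding V_def by simp
  qed
  define e where "e = k + \<nu>"
  define w where "w = m * zz / S"
  have w: "1 + w * t > 0" unfolding w_def using m t S zz by (simp add: add_pos_nonneg)
  have c: "S / 2 + zz / (2 * V) = S / 2 * (1 + w * t)"
    unfolding V w_def using S by (simp add: field_simps)
  have p1: "(2 * pi * V) powr (- d / 2) = (2 * pi) powr (- d / 2) * (m powr (d / 2) * t powr (d / 2))"
  proof -
    have "(2 * pi * (1 / (m * t))) powr (- d / 2) = (2 * pi) powr (- d / 2) * (1 / (m * t)) powr (- d / 2)"
      by (rule powr_mult)
    also have "(1 / (m * t)) powr (- d / 2) = (m * t) powr (d / 2)"
      using mt by (simp add: powr_divide powr_minus)
    also have "\<dots> = m powr (d / 2) * t powr (d / 2)"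
      by (rule powr_mult)
    finally show ?thesis unfolding V .
  qed
  have p2: "u powr a = m powr a * t powr a / q powr a"
    unfolding u_def using m t q by (simp add: powr_divide powr_mult)
  have p3: "(S / 2 * (1 + w * t)) powr e = (S / 2) powr e * (1 + w * t) powr e"
    by (rule powr_mult)
  have p4: "(2 / S) powr e = 1 / (S / 2) powr e"
    using S by (simp add: powr_divide)
  have p5: "m powr \<nu> = m powr (d / 2) * m powr a * m"
    using m by (simp add: \<nu> powr_add)
  have p6: "t powr (\<nu> - 1) = t powr (d / 2) * t powr a"
    using t by (simp add: \<nu> powr_add)
  have p7: "q powr (d / 2 - \<nu> - 1) = 1 / (q powr a * q\<^sup>2)"
  proof -
    have "d / 2 - \<nu> - 1 = - (a + 2)" by (simp add: \<nu>)
    then have "q powr (d / 2 - \<nu> - 1) = 1 / q powr (a + 2)" by (simp only: powr_minus_divide)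
    also have "q powr (a + 2) = q powr a * q\<^sup>2" using q by (simp only: powr_add powr_numeral)
    finally show ?thesis .
  qed
  \<comment> \<open>Abstracting the powers as positive atoms keeps \<open>field_simps\<close> from rewriting inside \<open>powr\<close>.\<close>
  have ratio: "K * (Ma * Ta / Qa) * H * (P * (M2 * T2) * (G / (S2 * W))) * (m / q\<^sup>2)
      = K * (M2 * Ma * m * P * G * (1 / S2)) * (T2 * Ta * (1 / (Qa * q\<^sup>2)) / W * H)"
    if "P > 0" "M2 > 0" "T2 > 0" "Ma > 0" "Ta > 0" "Qa > 0" "S2 > 0" "W > 0"
    for P M2 T2 Ma Ta Qa G S2 W :: real
    using that m q by (simp add: field_simps)
  show ?thesis
    unfolding V[symmetric] c p1 p2 p3 e_def[symmetric] p4 p5 p6 p7 w_def[symmetric]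
    by (rule ratio) (use m t q S w in auto)
qed

definition J_GM_integral :: "real \<Rightarrow> real \<Rightarrow> (real \<Rightarrow> real) \<Rightarrow> nat \<Rightarrow> real \<Rightarrow> ennreal"
  where "J_GM_integral d \<nu> f l w =
    (\<integral>\<^sup>+u. indicator {0<..<1} u *
      ennreal (u powr (\<nu> - 1) * (1 + (real l - 1) * u) powr (d / 2 - \<nu> - 1)
               / (1 + w * u) powr ((real l - 1) * d / 2 + \<nu>)
               * f (real l * u / (1 + (real l - 1) * u))) \<partial>lborel)"

lemma J_GM_eq_enn2real: "J_GM d \<nu> f l w = enn2real (J_GM_integral d \<nu> f l w)"
  unfolding J_GM_def J_GM_integral_def ..

definition GM_const :: "real \<Rightarrow> real \<Rightarrow> nat \<Rightarrow> real \<Rightarrow> real"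
  where "GM_const d \<nu> l S = real l powr \<nu> * (2 * pi) powr (- d / 2)
    * Gamma ((real l - 1) * d / 2 + \<nu>) * (2 / S) powr ((real l - 1) * d / 2 + \<nu>)"

lemma GM_const_pos:
  assumes "l \<ge> 1" "d \<ge> 0" "\<nu> > 0" "S > 0"
  shows "GM_const d \<nu> l S > 0"
proof -
  have "(real l - 1) * d / 2 + \<nu> > 0" using assms by (simp add: add_nonneg_pos)
  then show ?thesis
    unfolding GM_const_def using assms by simp
qed

lemma marginal_lik_prior_GM:
  fixes z :: "real^'d" and h :: "real \<Rightarrow> real"
  assumes l: "l \<ge> 1" and S: "S > 0" and K: "K \<ge> 0"
    and h[measurable]: "h \<in> borel_measurable borel" and h_nonneg: "\<And>u. h u \<ge> 0"
    and \<nu>: "\<nu> = real CARD('d) / 2 + a + 1" "\<nu> > 0"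
  shows "marginal_lik K l (prior_GM a h) z S
    = ennreal (K * GM_const (real CARD('d)) \<nu> l S)
      * J_GM_integral (real CARD('d)) \<nu> h l (real l * (norm z)\<^sup>2 / S)"
proof -
  define d where "d = real CARD('d)"
  define m where "m = real l"
  define k where "k = (m - 1) * d / 2"
  define V where "V u = 1 / m + (1 - u) / u" for u
  define q where "q t = 1 + (m - 1) * t" for t
  define G where "G u = K * u powr a * h u * ((2 * pi * V u) powr (- d / 2)
    * (Gamma (k + \<nu>) / (S / 2 + (norm z)\<^sup>2 / (2 * V u)) powr (k + \<nu>)))" for u
  define J where "J t = t powr (\<nu> - 1) * q t powr (d / 2 - \<nu> - 1)
    / (1 + (m * (norm z)\<^sup>2 / S) * t) powr (k + \<nu>) * h (m * t / q t)" for t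
  define C where "C = K * GM_const d \<nu> l S"
  have m: "m \<ge> 1" using l by (simp add: m_def)
  have C: "C \<ge> 0"
    using GM_const_pos[OF l _ \<nu>(2) S, of d] K by (simp add: C_def d_def)
  have "marginal_lik K l (prior_GM a h) z S = (\<integral>\<^sup>+u. indicator {0<..<1} u * ennreal (G u) \<partial>lborel)"
    unfolding G_def V_def k_def m_def d_def
    by (rule marginal_lik_prior_GM_eq_mixture[OF l S K h h_nonneg \<nu>])
  also have "\<dots> = (\<integral>\<^sup>+t. indicator {0<..<1} t * ennreal (G (m * t / q t) * (m / (q t)\<^sup>2)) \<partial>lborel)"
    unfolding q_def by (rule nn_integral_unit_interval_moebius_subst[OF m])
      (unfold G_def V_def, measurable)
  also have "\<dots> = (\<integral>\<^sup>+t. ennreal C * (indicator {0<..<1} t * ennreal (J t)) \<partial>lborel)"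
  proof (intro nn_integral_cong)
    fix t :: real
    show "indicator {0<..<1} t * ennreal (G (m * t / q t) * (m / (q t)\<^sup>2))
        = ennreal C * (indicator {0<..<1} t * ennreal (J t))"
    proof (cases "t \<in> {0<..<1}")
      case True
      have "G (m * t / q t) * (m / (q t)\<^sup>2) = C * J t"
        unfolding G_def V_def J_def C_def GM_const_def q_def k_def m_def
        by (rule GM_mixture_integrand_moebius) (use True l S \<nu> in \<open>auto simp: d_def\<close>)
      then show ?thesis
        by (simp add: ennreal_cmult_indicator[OF C])
    qed simp
  qed
  also have "\<dots> = ennreal C * (\<integral>\<^sup>+t. indicator {0<..<1} t * ennreal (J t) \<partial>lborel)"
    unfolding J_def q_def by (rule nn_integral_cmult) measurable
  finally show ?thesis
    unfolding C_def J_GM_integral_def J_def q_def k_def m_def d_def .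
qed

section \<open>The predictive density\<close>

lemma mult_chisq_dens_scaled:
  assumes "\<eta> > 0" "s > 0"
  shows "\<eta> * chisq_dens k (\<eta> * s)
    = s powr (k / 2 - 1) / (2 powr (k / 2) * Gamma (k / 2)) * (\<eta> powr (k / 2) * exp (- \<eta> * s / 2))"
proof -
  have "\<eta> powr (k / 2) = \<eta> * \<eta> powr (k / 2 - 1)"
    using assms powr_add[of \<eta> "k / 2 - 1" 1] by simp
  moreover have "(\<eta> * s) powr (k / 2 - 1) = \<eta> powr (k / 2 - 1) * s powr (k / 2 - 1)"
    by (rule powr_mult)
  ultimately show ?thesis
    unfolding chisq_dens_def using assms by (simp add: mult_ac)
qed

lemma gauss_dens_mult_mean_upd:
  fixes y xb \<mu> :: "real^'d"
  assumes \<eta>: "\<eta> > 0" and n: "n > 0"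
  shows "gauss_dens y \<mu> (1 / \<eta>) * gauss_dens xb \<mu> (1 / (real n * \<eta>))
    = (2 * pi * ((real n + 1) / real n)) powr (- real CARD('d) / 2) * \<eta> powr (real CARD('d) / 2)
      * exp (- (real n * (norm (y - xb))\<^sup>2 / (real n + 1)) * \<eta> / 2)
      * gauss_dens (mean_upd n xb y) \<mu> (1 / ((real n + 1) * \<eta>))"
proof -
  define N where "N = real n"
  have N: "N > 0" using n by (simp add: N_def)
  have t1: "1 / \<eta> > 0" and t2: "1 / (N * \<eta>) > 0" using \<eta> N by auto
  have V: "(N + 1) / N > 0" using N by simp
  have sum_var: "1 / \<eta> + 1 / (N * \<eta>) = ((N + 1) / N) / \<eta>"
    using \<eta> N by (simp add: field_simps)
  have post_var: "1 / \<eta> * (1 / (N * \<eta>)) / (1 / \<eta> + 1 / (N * \<eta>)) = 1 / ((N + 1) * \<eta>)"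
    using \<eta> N by (simp add: field_simps)
  have post_mean: "(1 / (N * \<eta>) / (1 / \<eta> + 1 / (N * \<eta>))) *\<^sub>R y
      + (1 / \<eta> / (1 / \<eta> + 1 / (N * \<eta>))) *\<^sub>R xb = mean_upd n xb y"
  proof -
    have "1 / (N * \<eta>) / (1 / \<eta> + 1 / (N * \<eta>)) = 1 / (N + 1)"
      and "1 / \<eta> / (1 / \<eta> + 1 / (N * \<eta>)) = N / (N + 1)"
      using \<eta> N by (simp_all add: field_simps)
    then show ?thesis
      by (simp add: mean_upd_def N_def algebra_simps)
  qed
  have shift: "gauss_dens y xb (((N + 1) / N) / \<eta>) = gauss_dens (y - xb) 0 (((N + 1) / N) / \<eta>)"
    by (simp add: gauss_dens_def)
  have exponent: "- ((norm (y - xb))\<^sup>2 / (2 * ((N + 1) / N))) * \<eta>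
      = - (N * (norm (y - xb))\<^sup>2 / (N + 1)) * \<eta> / 2"
    using N by (simp add: field_simps)
  show ?thesis
    using gauss_dens_mult[OF t1 t2, of y \<mu> xb, unfolded post_var post_mean,
        unfolded sum_var shift gauss_dens_zero_scale[OF V \<eta>] exponent]
    by (simp only: gauss_dens_commute[of \<mu>] N_def)
qed

lemma pred_den_eq_marginal_lik:
  fixes xb :: "real^'d"
  assumes n: "n \<ge> 1" and s: "s > 0"
  defines "k \<equiv> real (n - 1) * real CARD('d)"
  shows "pred_den n \<pi> xb s
    = marginal_lik (s powr (k / 2 - 1) / (2 powr (k / 2) * Gamma (k / 2))) n \<pi> xb s"
  unfolding pred_den_def marginal_lik_def
proof (intro nn_integral_cong)
  fix \<eta> :: real
  have "gauss_dens xb \<mu> (1 / (real n * \<eta>)) * \<eta> * chisq_dens k (\<eta> * s)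
      = s powr (k / 2 - 1) / (2 powr (k / 2) * Gamma (k / 2)) * gauss_dens xb \<mu> (1 / (real n * \<eta>))
        * (\<eta> powr ((real n - 1) * real CARD('d) / 2) * exp (- \<eta> * s / 2))"
    if "\<eta> > 0" for \<mu> :: "real^'d"
    using n by (simp add: mult.assoc mult_chisq_dens_scaled[OF that s] k_def)
  then show "indicator {0<..} \<eta> * (\<integral>\<^sup>+\<mu>. ennreal (gauss_dens xb \<mu> (1 / (real n * \<eta>)) * \<eta>
        * chisq_dens (real (n - 1) * real CARD('d)) (\<eta> * s)) * \<pi> \<mu> \<eta> \<partial>lborel)
      = indicator {0<..} \<eta> * (\<integral>\<^sup>+\<mu>. ennreal (s powr (k / 2 - 1) / (2 powr (k / 2) * Gamma (k / 2))
        * gauss_dens xb \<mu> (1 / (real n * \<eta>)) * (\<eta> powr ((real n - 1) * real CARD('d) / 2)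
        * exp (- \<eta> * s / 2))) * \<pi> \<mu> \<eta> \<partial>lborel)"
    by (cases "\<eta> > 0") (simp_all add: k_def)
qed

lemma pred_num_eq_marginal_lik:
  fixes y xb :: "real^'d"
  assumes n: "n \<ge> 1" and s: "s > 0"
  defines "k \<equiv> real (n - 1) * real CARD('d)"
  shows "pred_num n \<pi> y xb s
    = marginal_lik (s powr (k / 2 - 1) / (2 powr (k / 2) * Gamma (k / 2))
        * (2 * pi * ((real n + 1) / real n)) powr (- real CARD('d) / 2))
      (n + 1) \<pi> (mean_upd n xb y) (ss_upd n xb s y)"
  unfolding pred_num_def marginal_lik_def
proof (intro nn_integral_cong)
  fix \<eta> :: real
  define c where "c = s powr (k / 2 - 1) / (2 powr (k / 2) * Gamma (k / 2))"
  define Q where "Q = (2 * pi * ((real n + 1) / real n)) powr (- real CARD('d) / 2)"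
  have "gauss_dens y \<mu> (1 / \<eta>) * gauss_dens xb \<mu> (1 / (real n * \<eta>)) * \<eta> * chisq_dens k (\<eta> * s)
      = c * Q * gauss_dens (mean_upd n xb y) \<mu> (1 / ((real n + 1) * \<eta>))
        * (\<eta> powr (real n * real CARD('d) / 2) * exp (- \<eta> * ss_upd n xb s y / 2))"
    if \<eta>: "\<eta> > 0" for \<mu> :: "real^'d"
  proof -
    have "gauss_dens y \<mu> (1 / \<eta>) * gauss_dens xb \<mu> (1 / (real n * \<eta>)) * \<eta> * chisq_dens k (\<eta> * s)
        = (gauss_dens y \<mu> (1 / \<eta>) * gauss_dens xb \<mu> (1 / (real n * \<eta>))) * (\<eta> * chisq_dens k (\<eta> * s))"
      by (simp only: mult.assoc)
    also have "\<dots> = (Q * \<eta> powr (real CARD('d) / 2)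
          * exp (- (real n * (norm (y - xb))\<^sup>2 / (real n + 1)) * \<eta> / 2)
          * gauss_dens (mean_upd n xb y) \<mu> (1 / ((real n + 1) * \<eta>)))
        * (c * (\<eta> powr (k / 2) * exp (- \<eta> * s / 2)))"
      using n unfolding c_def Q_def
      by (simp only: gauss_dens_mult_mean_upd[OF \<eta>] mult_chisq_dens_scaled[OF \<eta> s]
          of_nat_0_less_iff less_eq_Suc_le One_nat_def)
    also have "\<dots> = c * Q * gauss_dens (mean_upd n xb y) \<mu> (1 / ((real n + 1) * \<eta>))
        * ((\<eta> powr (k / 2) * \<eta> powr (real CARD('d) / 2))
          * (exp (- \<eta> * s / 2) * exp (- (real n * (norm (y - xb))\<^sup>2 / (real n + 1)) * \<eta> / 2)))"
      by (simp only: mult_ac)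
    also have "\<eta> powr (k / 2) * \<eta> powr (real CARD('d) / 2) = \<eta> powr (real n * real CARD('d) / 2)"
      using n by (simp add: k_def powr_add[symmetric] field_simps)
    also have "exp (- \<eta> * s / 2) * exp (- (real n * (norm (y - xb))\<^sup>2 / (real n + 1)) * \<eta> / 2)
        = exp (- \<eta> * ss_upd n xb s y / 2)"
      by (simp add: ss_upd_def mult_exp_exp field_simps)
    finally show ?thesis .
  qed
  then show "indicator {0<..} \<eta> * (\<integral>\<^sup>+\<mu>. ennreal (gauss_dens y \<mu> (1 / \<eta>) * gauss_dens xb \<mu> (1 / (real n * \<eta>))
        * \<eta> * chisq_dens (real (n - 1) * real CARD('d)) (\<eta> * s)) * \<pi> \<mu> \<eta> \<partial>lborel)
      = indicator {0<..} \<eta> * (\<integral>\<^sup>+\<mu>. ennreal (s powr (k / 2 - 1) / (2 powr (k / 2) * Gamma (k / 2))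
        * (2 * pi * ((real n + 1) / real n)) powr (- real CARD('d) / 2)
        * gauss_dens (mean_upd n xb y) \<mu> (1 / (real (n + 1) * \<eta>))
        * (\<eta> powr ((real (n + 1) - 1) * real CARD('d) / 2) * exp (- \<eta> * ss_upd n xb s y / 2)))
        * \<pi> \<mu> \<eta> \<partial>lborel)"
    by (cases "\<eta> > 0") (simp_all add: k_def c_def Q_def add.commute)
qed

lemma GM_const_ratio:
  fixes n :: nat and D \<nu> s s' :: real
  assumes n: "n \<ge> 2" and D: "D \<ge> 1" and s: "s > 0" "s' > 0" and \<nu>: "\<nu> > 0"
  defines "N \<equiv> real n"
  shows "(2 * pi * ((N + 1) / N)) powr (- D / 2) * GM_const D \<nu> (n + 1) s' / GM_const D \<nu> n s
    = (1 + 1 / N) powr \<nu> * Beta \<nu> ((N - 1) * D / 2) / Beta \<nu> (N * D / 2) * (s' / s) powr (- \<nu>)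
      * (Gamma (N * D / 2) / Gamma ((N - 1) * D / 2) * (1 / (pi * s) * (N / (N + 1))) powr (D / 2)
         * (s' / s) powr (- N * D / 2))"
proof -
  define k where "k = (N - 1) * D / 2"
  define h where "h = D / 2"
  define r where "r = (N + 1) / N"
  have N: "N > 0" using n by (simp add: N_def)
  have k: "k > 0" and h: "h > 0" and r: "r > 0"
    using n D N by (simp_all add: k_def h_def r_def N_def)
  have Gamma_nz: "Gamma k \<noteq> 0" "Gamma (h + k) \<noteq> 0" "Gamma \<nu> \<noteq> 0"
    using Gamma_real_pos[OF k] Gamma_real_pos[OF add_pos_pos[OF h k]] Gamma_real_pos[OF \<nu>]
    by (auto dest: dual_order.strict_implies_not_eq)
  have f1: "(2 * pi * ((N + 1) / N)) powr (- D / 2) = 1 / (2 powr h * pi powr h * r powr h)"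
  proof -
    have "(2 * pi * ((N + 1) / N)) powr (- D / 2) = 1 / (2 * pi * r) powr h"
      by (simp add: r_def h_def powr_minus_divide[symmetric])
    then show ?thesis by (simp add: powr_mult)
  qed
  have f2: "real (n + 1) powr \<nu> = r powr \<nu> * N powr \<nu>"
    using N by (simp add: r_def N_def powr_divide add.commute)
  have e3: "(real (n + 1) - 1) * D / 2 + \<nu> = k + h + \<nu>" and e4: "(N - 1) * D / 2 = k"
    and e5: "N * D / 2 = k + h"
    by (simp_all add: k_def h_def N_def field_simps)
  have f4: "(2 / s') powr (k + h + \<nu>) = (2 powr k * 2 powr h * 2 powr \<nu>) / (s' powr k * s' powr h * s' powr \<nu>)"
    and f5: "(2 / s) powr (k + \<nu>) = (2 powr k * 2 powr \<nu>) / (s powr k * s powr \<nu>)"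
    using s by (simp_all add: powr_divide powr_add)
  have f6: "(1 + 1 / N) powr \<nu> = r powr \<nu>"
    using N by (simp add: r_def add_divide_distrib)
  have f7: "Beta \<nu> k = Gamma \<nu> * Gamma k / Gamma (k + \<nu>)"
    and f8: "Beta \<nu> (k + h) = Gamma \<nu> * Gamma (k + h) / Gamma (k + h + \<nu>)"
    by (simp_all add: Beta_def add_ac)
  have f9: "(s' / s) powr (- \<nu>) = s powr \<nu> / s' powr \<nu>"
    using s by (simp add: powr_divide powr_minus_divide)
  have f10: "(1 / (pi * s) * (N / (N + 1))) powr (D / 2) = 1 / (pi powr h * s powr h * r powr h)"
  proof -
    have "1 / (pi * s) * (N / (N + 1)) = 1 / (pi * s * r)" using N by (simp add: r_def field_simps)
    then show ?thesis using s r by (simp add: h_def powr_divide powr_mult)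
  qed
  have f11: "(s' / s) powr (- N * D / 2) = (s powr k * s powr h) / (s' powr k * s' powr h)"
  proof -
    have "- N * D / 2 = - (k + h)" by (simp add: k_def h_def field_simps)
    then have "(s' / s) powr (- N * D / 2) = 1 / (s' / s) powr (k + h)"
      by (simp only: powr_minus_divide)
    then show ?thesis using s by (simp add: powr_divide powr_add)
  qed
  show ?thesis
    unfolding GM_const_def N_def[symmetric] f1 f2 e3 e4 e5 f4 f5 f6 f7 f8 f9 f10 f11
    using s r N k h \<nu> Gamma_nz by (simp add: field_simps)
qed

lemma pred_R_eq_ss_upd:
  fixes y xb :: "real^'d"
  assumes s: "s > 0"
  shows "pred_R n y xb s = Gamma (real n * real CARD('d) / 2) / Gamma (real (n - 1) * real CARD('d) / 2)
    * (1 / (pi * s) * (real n / (real n + 1))) powr (real CARD('d) / 2)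
    * (ss_upd n xb s y / s) powr (- real n * real CARD('d) / 2)"
proof -
  have "1 + 1 / s * (real n / (real n + 1)) * (norm (y - xb))\<^sup>2 = ss_upd n xb s y / s"
  proof -
    have "s + s * real n > 0" using s by (simp add: add_pos_nonneg)
    then show ?thesis using s by (simp add: ss_upd_def field_simps)
  qed
  then show ?thesis
    unfolding pred_R_def by simp
qed

lemma bayes_pred_prior_GM:
  fixes y xb :: "real^'d" and h :: "real \<Rightarrow> real"
  assumes n: "n \<ge> 2" and s: "s > 0"
    and h[measurable]: "h \<in> borel_measurable borel" and h_nonneg: "\<And>u. h u \<ge> 0"
    and \<nu>: "\<nu> = real CARD('d) / 2 + a + 1" "\<nu> > 0"
  defines "d \<equiv> real CARD('d)"
  defines "xb' \<equiv> mean_upd n xb y" and "s' \<equiv> ss_upd n xb s y"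
  shows "bayes_pred n (prior_GM a h) y xb s =
     (1 + 1 / real n) powr \<nu> * Beta \<nu> (real (n - 1) * d / 2) / Beta \<nu> (real n * d / 2)
     * (s' / s) powr (- \<nu>)
     * (J_GM d \<nu> h (n + 1) (real (n + 1) * (norm xb')\<^sup>2 / s')
        / J_GM d \<nu> h n (real n * (norm xb)\<^sup>2 / s))
     * pred_R n y xb s"
proof -
  define k where "k = real (n - 1) * d"
  define c where "c = s powr (k / 2 - 1) / (2 powr (k / 2) * Gamma (k / 2))"
  define Q where "Q = (2 * pi * ((real n + 1) / real n)) powr (- d / 2)"
  define J where "J = J_GM_integral d \<nu> h n (real n * (norm xb)\<^sup>2 / s)"
  define J' where "J' = J_GM_integral d \<nu> h (n + 1) (real (n + 1) * (norm xb')\<^sup>2 / s')"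
  have "k / 2 > 0" using n by (simp add: k_def d_def)
  then have c: "c > 0" using s by (simp add: c_def)
  have s': "s' > 0" using s by (simp add: s'_def ss_upd_def add_pos_nonneg)
  have G: "GM_const d \<nu> n s > 0" "GM_const d \<nu> (n + 1) s' > 0"
    using n s s' \<nu> by (simp_all add: GM_const_pos d_def)
  have "pred_den n (prior_GM a h) xb s = marginal_lik c n (prior_GM a h) xb s"
    unfolding c_def k_def d_def by (rule pred_den_eq_marginal_lik) (use n s in auto)
  also have "\<dots> = ennreal (c * GM_const d \<nu> n s) * J"
    unfolding J_def d_def by (rule marginal_lik_prior_GM) (use n s c h_nonneg \<nu> in auto)
  moreover have "pred_num n (prior_GM a h) y xb s = marginal_lik (c * Q) (n + 1) (prior_GM a h) xb' s'"
    unfolding c_def Q_def k_def d_def xb'_def s'_def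
    by (rule pred_num_eq_marginal_lik) (use n s in auto)
  moreover have "\<dots> = ennreal (c * Q * GM_const d \<nu> (n + 1) s') * J'"
    unfolding J'_def d_def by (rule marginal_lik_prior_GM) (use s' c h_nonneg \<nu> in \<open>auto simp: Q_def\<close>)
  ultimately have "bayes_pred n (prior_GM a h) y xb s
      = (c * Q * GM_const d \<nu> (n + 1) s') * enn2real J' / ((c * GM_const d \<nu> n s) * enn2real J)"
    using c G by (simp add: bayes_pred_def enn2real_mult Q_def)
  also have "\<dots> = Q * GM_const d \<nu> (n + 1) s' / GM_const d \<nu> n s * (enn2real J' / enn2real J)"
    using c by simp
  also have "\<dots> = (1 + 1 / real n) powr \<nu> * Beta \<nu> ((real n - 1) * d / 2) / Beta \<nu> (real n * d / 2)
      * (s' / s) powr (- \<nu>) * (Gamma (real n * d / 2) / Gamma ((real n - 1) * d / 2)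
      * (1 / (pi * s) * (real n / (real n + 1))) powr (d / 2) * (s' / s) powr (- real n * d / 2))
      * (enn2real J' / enn2real J)"
    unfolding Q_def using n s s' \<nu> by (subst GM_const_ratio) (auto simp: d_def)
  finally show ?thesis
    unfolding pred_R_eq_ss_upd[OF s] J_def J'_def J_GM_eq_enn2real
    using n by (simp add: d_def s'_def mult_ac)
qed

lemma prior_GM_cong:
  assumes "\<And>u. u \<in> {0<..<1} \<Longrightarrow> f u = g u"
  shows "prior_GM a f = prior_GM a g"
  unfolding prior_GM_def using assms by (intro ext nn_integral_cong) (simp add: indicator_def)

lemma J_GM_cong:
  assumes l: "l \<ge> 1" and fg: "\<And>u. u \<in> {0<..<1} \<Longrightarrow> f u = g u"
  shows "J_GM d \<nu> f l w = J_GM d \<nu> g l w"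
  unfolding J_GM_def
proof (intro arg_cong[where f = enn2real] nn_integral_cong)
  fix u :: real
  have "real l * u / (1 + (real l - 1) * u) \<in> {0<..<1}" if "u \<in> {0<..<1}"
  proof -
    have "1 + (real l - 1) * u > 0" using l that by (simp add: add_pos_nonneg)
    then show ?thesis using l that by (auto simp: field_simps)
  qed
  then show "indicator {0<..<1} u * ennreal (u powr (\<nu> - 1) * (1 + (real l - 1) * u) powr (d / 2 - \<nu> - 1)
      / (1 + w * u) powr ((real l - 1) * d / 2 + \<nu>) * f (real l * u / (1 + (real l - 1) * u)))
    = indicator {0<..<1} u * ennreal (u powr (\<nu> - 1) * (1 + (real l - 1) * u) powr (d / 2 - \<nu> - 1)
      / (1 + w * u) powr ((real l - 1) * d / 2 + \<nu>) * g (real l * u / (1 + (real l - 1) * u)))"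
    by (cases "u \<in> {0<..<1}") (simp_all add: fg)
qed

theorem lemmaA1:
  fixes x :: "nat \<Rightarrow> real^'d" and y :: "real^'d" and n :: nat and a :: real
    and f :: "real \<Rightarrow> real"
  defines "d \<equiv> real CARD('d)"
  defines "\<nu> \<equiv> d / 2 + a + 1"
  defines "xb \<equiv> sample_mean x n" and "s \<equiv> sample_ss x n"
  defines "xb' \<equiv> mean_upd n xb y" and "s' \<equiv> ss_upd n xb s y"
  assumes n: "n \<ge> 2"
    and s_pos: "s > 0"
    and nu_pos: "\<nu> > 0"
    and f_nonneg: "\<forall>u\<in>{0<..<1}. f u \<ge> 0"
    and f_meas: "f \<in> borel_measurable (restrict_space lborel {0<..<1})"
    and den_pos: "0 < pred_den n (prior_GM a f) xb s"
    and den_fin: "pred_den n (prior_GM a f) xb s < \<infinity>"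
  shows "bayes_pred n (prior_GM a f) y xb s =
     (1 + 1 / real n) powr \<nu> * Beta \<nu> (real (n - 1) * d / 2) / Beta \<nu> (real n * d / 2)
     * (s' / s) powr (- \<nu>)
     * (J_GM d \<nu> f (n + 1) (real (n + 1) * (norm xb')\<^sup>2 / s')
        / J_GM d \<nu> f n (real n * (norm xb)\<^sup>2 / s))
     * pred_R n y xb s"
proof -
  define f0 where "f0 u = (if u \<in> {0<..<1} then f u else 0)" for u
  have f0_meas: "f0 \<in> borel_measurable borel"
    using f_meas unfolding f0_def[abs_def] by (subst (asm) measurable_restrict_space_iff) auto
  have f0_nonneg: "f0 u \<ge> 0" for u
    using f_nonneg by (simp add: f0_def)
  have f_eq_f0: "f u = f0 u" if "u \<in> {0<..<1}" for u
    using that by (simp add: f0_def)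
  have nu_eq: "\<nu> = real CARD('d) / 2 + a + 1"
    by (simp add: \<nu>_def d_def)
  have "(prior_GM a f :: real^'d \<Rightarrow> real \<Rightarrow> ennreal) = prior_GM a f0"
    by (rule prior_GM_cong) (rule f_eq_f0)
  moreover have "J_GM d \<nu> f l w = J_GM d \<nu> f0 l w" if "l \<ge> 1" for l w
    using that f_eq_f0 by (rule J_GM_cong)
  ultimately show ?thesis
    using bayes_pred_prior_GM[OF n s_pos f0_meas f0_nonneg nu_eq nu_pos] n
    unfolding d_def xb'_def s'_def by simp
qed

end
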